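(* Let $e_1=(1:0:0)$, $e_2=(0:1:0)$, $e_3=(0:0:1)$, $e_4=(1:1:1)$, let $a\vee b$ denote the line through $a,b$, and set $\mathcal T_1=\{(e_1,e_1\vee e_3)\}$, $\mathcal T_2=\{e_2,(e_1,e_1\vee e_3)\}$, $\mathcal T_3=\{(e_1,e_1\vee e_3),(e_2,e_2\vee e_3)\}$, $\mathcal T_4=\{e_2,e_3,(e_1,e_1\vee e_4)\}$. Then for $i=1,2,3,4$ one has $\operatorname{span}(F_{\mathcal T_i})=I_{\mathcal T_i}$.
   Context: $H_k\subseteq\mathbb R[x,y,z]$: real ternary forms of degree $k$; $P_{3,4}=\{f\in H_4: f\ge0\text{ on }\mathbb P^2(\mathbb R)\}$. Local notation. For $p\in\mathbb P^2(\mathbb R)$, affine coordinates centered at $p$ are obtained by an invertible real linear change of coordinates sending $p$ to $(0:0:1)$ and setting $z=1$; $f\in H_4$ becomes $f(x,y)=\sum_{i+j\le4}a_{ij}x^iy^j$, and $\operatorname{ord}_p(f)$ is the least $i+j$ with $a_{ij}\ne0$. For a real line $l\ni p$ choose such coordinates with $l=\{y=0\}$, and for $\operatorname{ord}_pf\ge2$ put $\tilde f(x,y)=f(x,xy)/x^2$. Sets. $F_s=\{f\in P_{3,4}: f(s)=0\}$, $I_s=\{f\in H_4:\operatorname{ord}_sf\ge2\}$; $F_{(p,l)}=\{f\in P_{3,4}: f(p)=0,\ \tilde f(0,0)=0\}$, $I_{(p,l)}=\{f\in H_4: a_{00}=a_{10}=a_{01}=a_{20}=a_{11}=a_{30}=0\}$.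 For a configuration $\mathcal S=\{s_1,\dots,s_n,(p_1,l_1),\dots,(p_m,l_m)\}$ (pairwise distinct real points, real lines $l_j\ni p_j$): $F_{\mathcal S}=\bigcap_iF_{s_i}\cap\bigcap_jF_{(p_j,l_j)}$, $I_{\mathcal S}=\bigcap_iI_{s_i}\cap\bigcap_jI_{(p_j,l_j)}$. *)

theory Defs
  imports "HOL-Analysis.Analysis" "HOL-Library.Function_Algebras"
begin

text \<open>Points of the real projective plane are represented by nonzero vectors of real^3
  (homogeneous coordinates); a ternary form is represented by its evaluation function
  real^3 \<Rightarrow> real. A real projective line is represented by a nonzero normal vector n,
  the line being the set of points v with n \<bullet> v = 0.\<close>

definition monos4 :: "(nat \<times> nat \<times> nat) set" where
  "monos4 = {(i,j,k). i + j + k = 4}"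

definition H4 :: "(real^3 \<Rightarrow> real) set" where
  "H4 = {f. \<exists>c :: nat \<times> nat \<times> nat \<Rightarrow> real. \<forall>v.
      f v = (\<Sum>(i,j,k)\<in>monos4. c (i,j,k) * (v$1)^i * (v$2)^j * (v$3)^k)}"

definition P34 :: "(real^3 \<Rightarrow> real) set" where
  "P34 = {f \<in> H4. \<forall>v. 0 \<le> f v}"

text \<open>The line through two (distinct) points a, b.\<close>
definition join :: "real^3 \<Rightarrow> real^3 \<Rightarrow> real^3" where
  "join a b = cross3 a b"

definition on_line :: "real^3 \<Rightarrow> real^3 \<Rightarrow> bool" where
  "on_line v n \<longleftrightarrow> n \<bullet> v = 0"

definition e1 :: "real^3" where "e1 = vector [1,0,0]"
definition e2 :: "real^3" where "e2 = vector [0,1,0]"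
definition e3 :: "real^3" where "e3 = vector [0,0,1]"
definition e4 :: "real^3" where "e4 = vector [1,1,1]"

text \<open>Affine coordinates centred at p: a matrix B (the inverse of the coordinate change)
  with B invertible and B e3 a representative of p; the form in the new coordinates is
  f(B v), dehomogenised at z = 1. The local coefficients a_ij are those of
  f(B (x,y,1)) = sum a_ij x^i y^j (i+j \<le> 4).\<close>
definition affine_coords_at :: "real^3 \<Rightarrow> real^3^3 \<Rightarrow> bool" where
  "affine_coords_at p B \<longleftrightarrow> invertible B \<and> (\<exists>t. t \<noteq> 0 \<and> B *v e3 = t *\<^sub>R p)"

text \<open>Coordinates centred at p in which the line with normal n becomes {y = 0}:
  the image of the plane y = 0 is the plane of l, i.e. B e1 and B e3 lie on l.\<close>
definition affine_coords_at_line :: "real^3 \<Rightarrow> real^3 \<Rightarrow> real^3^3 \<Rightarrow> bool" where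
  "affine_coords_at_line p n B \<longleftrightarrow> affine_coords_at p B \<and> on_line (B *v e1) n \<and> on_line (B *v e3) n"

definition local_coeffs :: "(real^3 \<Rightarrow> real) \<Rightarrow> real^3^3 \<Rightarrow> (nat \<Rightarrow> nat \<Rightarrow> real) \<Rightarrow> bool" where
  "local_coeffs f B a \<longleftrightarrow>
     (\<forall>x y. f (B *v vector [x, y, 1]) = (\<Sum>(i,j)\<in>{(i,j). i + j \<le> (4::nat)}. a i j * x^i * y^j))"

definition Fpt :: "real^3 \<Rightarrow> (real^3 \<Rightarrow> real) set" where
  "Fpt s = {f \<in> P34. f s = 0}"

definition Ipt :: "real^3 \<Rightarrow> (real^3 \<Rightarrow> real) set" where
  "Ipt s = {f \<in> H4. \<exists>B a. affine_coords_at s B \<and> local_coeffs f B a \<and>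
                       a 0 0 = 0 \<and> a 1 0 = 0 \<and> a 0 1 = 0}"

text \<open>F_(p,l): f(p) = 0 and tilde f(0,0) = 0, where tilde f(x,y) = f(x,xy)/x^2
  (defined since ord_p f \<ge> 2); in local coordinates tilde f(0,0) = a_20.\<close>
definition Fpl :: "real^3 \<Rightarrow> real^3 \<Rightarrow> (real^3 \<Rightarrow> real) set" where
  "Fpl p n = {f \<in> P34. f p = 0 \<and> (\<exists>B a. affine_coords_at_line p n B \<and> local_coeffs f B a \<and>
                       a 0 0 = 0 \<and> a 1 0 = 0 \<and> a 0 1 = 0 \<and> a 2 0 = 0)}"

definition Ipl :: "real^3 \<Rightarrow> real^3 \<Rightarrow> (real^3 \<Rightarrow> real) set" where
  "Ipl p n = {f \<in> H4. \<exists>B a. affine_coords_at_line p n B \<and> local_coeffs f B a \<and>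
     a 0 0 = 0 \<and> a 1 0 = 0 \<and> a 0 1 = 0 \<and> a 2 0 = 0 \<and> a 1 1 = 0 \<and> a 3 0 = 0}"

definition Fconf :: "(real^3) list \<Rightarrow> ((real^3) \<times> (real^3)) list \<Rightarrow> (real^3 \<Rightarrow> real) set" where
  "Fconf ss pls = P34 \<inter> (\<Inter>s\<in>set ss. Fpt s) \<inter> (\<Inter>(p,n)\<in>set pls. Fpl p n)"

definition Iconf :: "(real^3) list \<Rightarrow> ((real^3) \<times> (real^3)) list \<Rightarrow> (real^3 \<Rightarrow> real) set" where
  "Iconf ss pls = H4 \<inter> (\<Inter>s\<in>set ss. Ipt s) \<inter> (\<Inter>(p,n)\<in>set pls. Ipl p n)"

definition fspan :: "(real^3 \<Rightarrow> real) set \<Rightarrow> (real^3 \<Rightarrow> real) set" where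
  "fspan S = module.span (\<lambda>c f. (\<lambda>v. c * f v)) S"

end

theory Submission
  imports Defs "HOL-Computational_Algebra.Polynomial"
begin

text \<open>
  For a configuration T of points s and point-line pairs (p, l), F_T is the cone of
  nonnegative quartics with the prescribed zeros, and I_T the space of quartics whose local
  coefficients vanish in degree < 2 at each s and, in coordinates with l = {y = 0}, in
  weighted degree < 4 (weights x = 1, y = 2) at each (p, l). First we show they do not depend on the chart: two
  charts differ by an affine substitution of the local coordinates, which cannot lower weighted
  order (bivariate polynomials and their supports). Hence I_T is a subspace. Positivity
  upgrades the conditions of F_T to those of I_T, so span F_T \<subseteq> I_T for every configuration.
  Conversely, squares of members of a linear system of quadrics adapted to T lie in F_T, so by
  polarisation all products of its generators lie in span F_T; for each T_i of the theorem,
  every element of I_T is such a combination of products (read off in explicit charts).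
\<close>

section \<open>Bivariate polynomials and weighted order\<close>

abbreviation D4 :: "(nat \<times> nat) set" where
  "D4 \<equiv> {(i,j). i + j \<le> 4}"

lemma D4_eq:
  "D4 = {(0,0),(0,1),(0,2),(0,3),(0,4),(1,0),(1,1),(1,2),(1,3),(2,0),(2,1),(2,2),(3,0),(3,1),(4,0)}"
proof (intro equalityI subsetI)
  fix x assume "x \<in> D4"
  then obtain i j where x: "x = (i,j)" "i + j \<le> 4" by auto
  then have "i = 0 \<or> i = 1 \<or> i = 2 \<or> i = 3 \<or> i = 4" "j = 0 \<or> j = 1 \<or> j = 2 \<or> j = 3 \<or> j = 4"
    by arith+
  then show "x \<in> {(0,0),(0,1),(0,2),(0,3),(0,4),(1,0),(1,1),(1,2),(1,3),(2,0),(2,1),(2,2),(3,0),(3,1),(4,0)}"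
    using x by (elim disjE) simp_all
qed auto

lemma finite_D4 [simp]: "finite D4"
  by (simp add: D4_eq)

lemma sum_D4:
  fixes a :: "nat \<Rightarrow> nat \<Rightarrow> real"
  shows "(\<Sum>(i,j)\<in>D4. a i j * x^i * y^j) = a 0 0 + a 0 1 * y + a 0 2 * y^2 + a 0 3 * y^3 + a 0 4 * y^4
    + a 1 0 * x + a 1 1 * x * y + a 1 2 * x * y^2 + a 1 3 * x * y^3 + a 2 0 * x^2 + a 2 1 * x^2 * y
    + a 2 2 * x^2 * y^2 + a 3 0 * x^3 + a 3 1 * x^3 * y + a 4 0 * x^4"
  by (simp add: D4_eq algebra_simps)

text \<open>A polynomial in x and y is represented as a polynomial in y with coefficients in
  real[x]; coeff2 P i j is the coefficient of x^i y^j.\<close>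
definition eval2 :: "real poly poly \<Rightarrow> real \<Rightarrow> real \<Rightarrow> real" where
  "eval2 P x y = poly (poly P [:y:]) x"

definition coeff2 :: "real poly poly \<Rightarrow> nat \<Rightarrow> nat \<Rightarrow> real" where
  "coeff2 P i j = coeff (coeff P j) i"

definition monom2 :: "nat \<Rightarrow> nat \<Rightarrow> real \<Rightarrow> real poly poly" where
  "monom2 i j c = monom (monom c i) j"

lemma eval2_add [simp]: "eval2 (P + Q) x y = eval2 P x y + eval2 Q x y"
  and eval2_mult [simp]: "eval2 (P * Q) x y = eval2 P x y * eval2 Q x y"
  and eval2_diff [simp]: "eval2 (P - Q) x y = eval2 P x y - eval2 Q x y"
  and eval2_power [simp]: "eval2 (P ^ n) x y = eval2 P x y ^ n"
  and eval2_sum [simp]: "eval2 (sum F A) x y = (\<Sum>k\<in>A. eval2 (F k) x y)"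
  and eval2_monom2 [simp]: "eval2 (monom2 i j c) x y = c * x^i * y^j"
  by (simp_all add: eval2_def monom2_def poly_sum poly_monom poly_power)

lemma coeff2_add [simp]: "coeff2 (P + Q) i j = coeff2 P i j + coeff2 Q i j"
  and coeff2_sum: "coeff2 (sum F A) i j = (\<Sum>k\<in>A. coeff2 (F k) i j)"
  and coeff2_monom2: "coeff2 (monom2 k l c) i j = (if i = k \<and> j = l then c else 0)"
  by (simp_all add: coeff2_def coeff_sum monom2_def coeff_monom)

lemma coeff2_mult:
  "coeff2 (P * Q) i j = (\<Sum>j1\<le>j. \<Sum>i1\<le>i. coeff2 P i1 j1 * coeff2 Q (i - i1) (j - j1))"
  by (simp add: coeff2_def coeff_mult coeff_sum)

lemma coeff2_eqI:
  assumes "\<And>i j. coeff2 P i j = coeff2 Q i j" shows "P = Q"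
  using assms by (intro poly_eqI) (simp add: coeff2_def)

lemma poly_swap_vars: "poly (poly P [:y:]) x = poly (map_poly (\<lambda>c. poly c x) P) y"
  by (induction P) (simp_all add: map_poly_pCons)

lemma eval2_inj:
  assumes "\<And>x y. eval2 P x y = eval2 Q x y" shows "P = Q"
proof -
  have "\<And>x y. eval2 (P - Q) x y = 0" using assms by simp
  then have "\<And>x. map_poly (\<lambda>c. poly c x) (P - Q) = 0"
    by (metis eval2_def poly_all_0_iff_0 poly_swap_vars)
  then have "\<And>x j. poly (coeff (P - Q) j) x = 0"
    by (metis coeff_0 coeff_map_poly poly_0)
  then have "\<And>j. coeff (P - Q) j = 0" by (metis poly_all_0_iff_0)
  then show ?thesis by (metis coeff_0 poly_eqI right_minus_eq)
qed

definition poly_of :: "(nat \<Rightarrow> nat \<Rightarrow> real) \<Rightarrow> real poly poly" where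
  "poly_of a = (\<Sum>(i,j)\<in>D4. monom2 i j (a i j))"

lemma eval2_poly_of: "eval2 (poly_of a) x y = (\<Sum>(i,j)\<in>D4. a i j * x^i * y^j)"
  unfolding poly_of_def by (simp add: case_prod_beta)

lemma coeff2_poly_of: "coeff2 (poly_of a) k l = (if (k,l) \<in> D4 then a k l else 0)"
proof -
  have "coeff2 (poly_of a) k l = (\<Sum>x\<in>D4. if x = (k,l) then a k l else 0)"
    unfolding poly_of_def coeff2_sum by (rule sum.cong) (auto simp: coeff2_monom2 split: if_splits)
  also have "\<dots> = (if (k,l) \<in> D4 then a k l else 0)" by (subst sum.delta) auto
  finally show ?thesis .
qed

definition supported :: "(nat \<times> nat) set \<Rightarrow> real poly poly \<Rightarrow> bool" where
  "supported S P \<longleftrightarrow> (\<forall>i j. coeff2 P i j \<noteq> 0 \<longrightarrow> (i,j) \<in> S)"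

lemma supported_0: "supported S 0"
  by (simp add: supported_def coeff2_def)

lemma supported_mon: "(i,j) \<in> S \<Longrightarrow> supported S (monom2 i j c)"
  by (simp add: supported_def coeff2_monom2)

lemma supported_1: "(0,0) \<in> S \<Longrightarrow> supported S 1"
  using supported_mon[of 0 0 S 1] by (simp add: monom2_def monom_0 one_pCons)

lemma supported_mono: "supported S P \<Longrightarrow> S \<subseteq> T \<Longrightarrow> supported T P"
  by (auto simp: supported_def)

lemma supported_add: "supported S P \<Longrightarrow> supported S Q \<Longrightarrow> supported S (P + Q)"
  unfolding supported_def coeff2_add by (metis add.left_neutral)

lemma supported_sum: "(\<And>k. k \<in> A \<Longrightarrow> supported S (F k)) \<Longrightarrow> supported S (sum F A)"
  by (induction A rule: infinite_finite_induct) (auto intro: supported_0 supported_add)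

lemma supported_mult:
  assumes P: "supported S P" and Q: "supported T Q"
    and ST: "\<And>i j k l. (i,j) \<in> S \<Longrightarrow> (k,l) \<in> T \<Longrightarrow> (i + k, j + l) \<in> U"
  shows "supported U (P * Q)"
  unfolding supported_def
proof (intro allI impI)
  fix i j assume "coeff2 (P * Q) i j \<noteq> 0"
  then obtain j1 i1 where ij: "j1 \<le> j" "i1 \<le> i" and nz: "coeff2 P i1 j1 * coeff2 Q (i - i1) (j - j1) \<noteq> 0"
    unfolding coeff2_mult by (metis (no_types, lifting) atMost_iff sum.neutral)
  then have "(i1, j1) \<in> S" "(i - i1, j - j1) \<in> T"
    using P Q unfolding supported_def by auto
  then have "(i1 + (i - i1), j1 + (j - j1)) \<in> U" by (rule ST)
  then show "(i, j) \<in> U" using ij by simp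
qed

abbreviation wt_ge :: "nat \<Rightarrow> nat \<Rightarrow> real poly poly \<Rightarrow> bool" where
  "wt_ge w d \<equiv> supported {(i,j). d \<le> i + w * j}"

abbreviation deg_le :: "nat \<Rightarrow> real poly poly \<Rightarrow> bool" where
  "deg_le d \<equiv> supported {(i,j). i + j \<le> d}"

lemma wt_ge_zero_order: "wt_ge w 0 P"
  by (simp add: supported_def)

lemma wt_ge_mult: "wt_ge w d P \<Longrightarrow> wt_ge w e Q \<Longrightarrow> wt_ge w (d + e) (P * Q)"
  by (erule supported_mult, assumption) (simp add: distrib_left)

lemma deg_le_mult: "deg_le d P \<Longrightarrow> deg_le e Q \<Longrightarrow> deg_le (d + e) (P * Q)"
  by (erule supported_mult, assumption) simp

lemma wt_ge_power: "wt_ge w d P \<Longrightarrow> wt_ge w (n * d) (P ^ n)"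
  by (induction n) (simp_all add: supported_1 wt_ge_mult)

lemma deg_le_power: "deg_le d P \<Longrightarrow> deg_le (n * d) (P ^ n)"
  by (induction n) (simp_all add: supported_1 deg_le_mult)

lemma monom2_zero [simp]: "monom2 i j 0 = 0"
  by (simp add: monom2_def)

definition low_vanish :: "nat \<Rightarrow> nat \<Rightarrow> (nat \<Rightarrow> nat \<Rightarrow> real) \<Rightarrow> bool" where
  "low_vanish w d a \<longleftrightarrow> (\<forall>(i,j)\<in>D4. i + w * j < d \<longrightarrow> a i j = 0)"

lemma low_vanish_1_2: "low_vanish 1 2 a \<longleftrightarrow> a 0 0 = 0 \<and> a 1 0 = 0 \<and> a 0 1 = 0"
  and low_vanish_2_3: "low_vanish 2 3 a \<longleftrightarrow> a 0 0 = 0 \<and> a 1 0 = 0 \<and> a 0 1 = 0 \<and> a 2 0 = 0"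
  and low_vanish_2_4: "low_vanish 2 4 a \<longleftrightarrow>
    a 0 0 = 0 \<and> a 1 0 = 0 \<and> a 0 1 = 0 \<and> a 2 0 = 0 \<and> a 1 1 = 0 \<and> a 3 0 = 0"
  by (auto simp: low_vanish_def D4_eq)

lemma low_vanish_of_poly:
  assumes "eval2 (poly_of a) = eval2 P" and "wt_ge w d P"
  shows "low_vanish w d a"
proof -
  have P_eq: "poly_of a = P" using assms(1) by (intro eval2_inj) simp
  show ?thesis
    using assms(2) unfolding low_vanish_def supported_def P_eq[symmetric] coeff2_poly_of
    by (force simp: not_le[symmetric])
qed

lemma wt_ge_substituted_term:
  assumes X: "wt_ge w 1 X" and Y: "wt_ge w w Y" and c: "c \<noteq> 0 \<Longrightarrow> d \<le> i + w * j"
  shows "wt_ge w d (monom2 0 0 c * X^i * Y^j * Z^k)"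
proof (cases "c = 0")
  case False
  have "wt_ge w (0 + i * 1 + j * w + k * 0) (monom2 0 0 c * X^i * Y^j * Z^k)"
    by (intro wt_ge_mult wt_ge_power X Y wt_ge_zero_order)
  then have "wt_ge w (i + w * j) (monom2 0 0 c * X^i * Y^j * Z^k)"
    by (simp add: mult.commute)
  then show ?thesis using c False by (auto elim: supported_mono)
qed (simp add: supported_0)

text \<open>The key invariance: an affine substitution x' = u1 x + v1 y, y' = u2 x + v2 y,
  z' = n1 x + n2 y + n3 preserves vanishing below weighted degree d, provided y' still has
  weight w (automatic if w = 1, and guaranteed by u2 = 0 otherwise).\<close>
lemma low_vanish_substitution:
  fixes a a' :: "nat \<Rightarrow> nat \<Rightarrow> real"
  assumes eq: "\<And>x y. (\<Sum>(i,j)\<in>D4. a' i j * x^i * y^j)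
      = (\<Sum>(i,j)\<in>D4. a i j * (u1*x + v1*y)^i * (u2*x + v2*y)^j * (n1*x + n2*y + n3)^(4-i-j))"
    and w: "1 \<le> w" "u2 = 0 \<or> w = 1" and a: "low_vanish w d a"
  shows "low_vanish w d a'"
proof -
  define X where "X = monom2 1 0 u1 + monom2 0 1 v1"
  define Y where "Y = monom2 1 0 u2 + monom2 0 1 v2"
  define Z where "Z = monom2 1 0 n1 + monom2 0 1 n2 + monom2 0 0 n3"
  define P where "P = (\<Sum>(i,j)\<in>D4. monom2 0 0 (a i j) * X^i * Y^j * Z^(4-i-j))"
  have "eval2 P x y
      = (\<Sum>(i,j)\<in>D4. a i j * (u1*x + v1*y)^i * (u2*x + v2*y)^j * (n1*x + n2*y + n3)^(4-i-j))" for x y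
    by (simp add: P_def X_def Y_def Z_def case_prod_beta)
  then have "eval2 (poly_of a') = eval2 P"
    by (simp add: fun_eq_iff eval2_poly_of eq)
  moreover have "wt_ge w d P"
    unfolding P_def
  proof (intro supported_sum, clarify)
    fix i j :: nat assume "i + j \<le> 4"
    moreover have "wt_ge w 1 X"
      unfolding X_def using w(1) by (intro supported_add supported_mon) auto
    moreover have "wt_ge w w Y"
      using w(2) unfolding Y_def by (cases "u2 = 0") (simp_all add: supported_add supported_mon)
    ultimately show "wt_ge w d (monom2 0 0 (a i j) * X^i * Y^j * Z^(4-i-j))"
      using a unfolding low_vanish_def by (intro wt_ge_substituted_term) force+
  qed
  ultimately show ?thesis by (rule low_vanish_of_poly)
qed

section \<open>Local coefficients and change of chart\<close>

lemma mult_vector3: "((M::real^3^3) *v vector[x,y,z]) $ i = M$i$1*x + M$i$2*y + M$i$3*z"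
  by (simp add: matrix_vector_mult_def sum_3)

lemma quartic_homogeneous:
  assumes "f \<in> H4" shows "f (t *\<^sub>R v) = t^4 * f v"
proof -
  obtain c where c: "\<And>v. f v = (\<Sum>(i,j,k)\<in>monos4. c (i,j,k) * (v$1)^i * (v$2)^j * (v$3)^k)"
    using assms by (auto simp: H4_def)
  have "(case m of (i,j,k) \<Rightarrow> c (i,j,k) * ((t *\<^sub>R v)$1)^i * ((t *\<^sub>R v)$2)^j * ((t *\<^sub>R v)$3)^k)
      = t^4 * (case m of (i,j,k) \<Rightarrow> c (i,j,k) * (v$1)^i * (v$2)^j * (v$3)^k)" if hm: "m \<in> monos4" for m
  proof -
    obtain i j k where m: "m = (i,j,k)" and "i + j + k = 4"
      using hm by (cases m) (auto simp: monos4_def)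
    then have "t^4 = t^i * t^j * t^k" by (simp flip: power_add)
    then show ?thesis by (simp add: m power_mult_distrib)
  qed
  then show ?thesis
    unfolding c sum_distrib_left by (rule sum.cong[OF refl])
qed

lemma deg_le_4_eq_poly_of: "deg_le 4 P \<Longrightarrow> P = poly_of (coeff2 P)"
  by (rule coeff2_eqI) (auto simp: coeff2_poly_of supported_def)

lemma local_coeffs_exist:
  assumes "f \<in> H4" shows "\<exists>a. local_coeffs f B a"
proof -
  obtain c where c: "\<And>v. f v = (\<Sum>(i,j,k)\<in>monos4. c (i,j,k) * (v$1)^i * (v$2)^j * (v$3)^k)"
    using assms by (auto simp: H4_def)
  define L where "L r = monom2 1 0 (B$r$1) + monom2 0 1 (B$r$2) + monom2 0 0 (B$r$3)" for r
  define P where "P = (\<Sum>(i,j,k)\<in>monos4. monom2 0 0 (c (i,j,k)) * L 1^i * L 2^j * L 3^k)"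
  have L: "deg_le 1 (L r)" for r
    unfolding L_def by (intro supported_add supported_mon) auto
  have "deg_le 4 P"
    unfolding P_def
  proof (rule supported_sum, clarify)
    fix i j k assume "(i,j,k) \<in> monos4"
    then have "deg_le (0 + i * 1 + j * 1 + k * 1) (monom2 0 0 (c (i,j,k)) * L 1^i * L 2^j * L 3^k)"
      by (intro deg_le_mult deg_le_power L supported_mon) auto
    then show "deg_le 4 (monom2 0 0 (c (i,j,k)) * L 1^i * L 2^j * L 3^k)"
      using \<open>(i,j,k) \<in> monos4\<close> by (simp add: monos4_def)
  qed
  moreover have "f (B *v vector[x,y,1]) = eval2 P x y" for x y
    by (simp add: c P_def L_def mult_vector3 case_prod_beta)
  ultimately have "local_coeffs f B (coeff2 P)"
    unfolding local_coeffs_def by (metis deg_le_4_eq_poly_of eval2_poly_of)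
  then show ?thesis by blast
qed

lemma continuous_eq_at_0:
  fixes g h :: "real \<Rightarrow> real"
  assumes "isCont g 0" "isCont h 0" "\<And>z. z \<noteq> 0 \<Longrightarrow> g z = h z" shows "g 0 = h 0"
proof -
  have "g \<midarrow>0\<rightarrow> h 0"
    using assms(2) LIM_equal[of 0 g h] assms(3) by (auto simp: isCont_def)
  then show ?thesis using assms(1) LIM_unique by (auto simp: isCont_def)
qed

lemma dehomogenised_term:
  fixes X Y Z c :: real assumes "i + j \<le> 4" "Z \<noteq> 0"
  shows "Z^4 * (c * (X/Z)^i * (Y/Z)^j) = c * X^i * Y^j * Z^(4-i-j)"
proof -
  have "Z^4 = Z^i * Z^j * Z^(4-i-j)" using assms(1) by (simp flip: power_add)
  then show ?thesis using assms(2) by (simp add: field_simps)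
qed

lemma local_coeffs_homogeneous:
  assumes f: "f \<in> H4" and a: "local_coeffs f B a"
  shows "f (B *v vector[X,Y,Z]) = (\<Sum>(i,j)\<in>D4. a i j * X^i * Y^j * Z^(4-i-j))"
proof -
  have off_0: "f (B *v vector[X,Y,Z]) = (\<Sum>(i,j)\<in>D4. a i j * X^i * Y^j * Z^(4-i-j))"
    if Z: "Z \<noteq> 0" for Z
  proof -
    have "vector[X,Y,Z] = Z *\<^sub>R (vector[X/Z, Y/Z, 1] :: real^3)"
      using Z by (simp add: vec_eq_iff forall_3)
    then have "f (B *v vector[X,Y,Z]) = Z^4 * f (B *v vector[X/Z, Y/Z, 1])"
      by (simp add: matrix_vector_mult_scaleR quartic_homogeneous[OF f])
    also have "\<dots> = Z^4 * (\<Sum>(i,j)\<in>D4. a i j * (X/Z)^i * (Y/Z)^j)"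
      using a by (simp add: local_coeffs_def)
    also have "\<dots> = (\<Sum>(i,j)\<in>D4. a i j * X^i * Y^j * Z^(4-i-j))"
      unfolding sum_distrib_left by (rule sum.cong) (auto simp: dehomogenised_term Z)
    finally show ?thesis .
  qed
  obtain c where c: "\<And>v. f v = (\<Sum>(i,j,k)\<in>monos4. c (i,j,k) * (v$1)^i * (v$2)^j * (v$3)^k)"
    using f by (auto simp: H4_def)
  define g where "g = (\<lambda>z. f (B *v vector[X,Y,z]))"
  define h where "h = (\<lambda>z. (\<Sum>(i,j)\<in>D4. a i j * X^i * Y^j * z^(4-i-j)))"
  have "g = (\<lambda>z. (\<Sum>m\<in>monos4. c m * (B$1$1*X + B$1$2*Y + B$1$3*z)^(fst m)
      * (B$2$1*X + B$2$2*Y + B$2$3*z)^(fst (snd m)) * (B$3$1*X + B$3$2*Y + B$3$3*z)^(snd (snd m))))"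
    unfolding g_def c by (simp add: mult_vector3 case_prod_beta)
  then have "isCont g 0" by (auto intro!: continuous_intros)
  moreover have "isCont h 0" unfolding h_def by (simp add: case_prod_beta)
  ultimately have "g 0 = h 0"
    by (rule continuous_eq_at_0) (simp add: g_def h_def off_0)
  then show ?thesis
    by (cases "Z = 0") (simp_all add: g_def h_def off_0)
qed

lemma e1_mult: "((N::real^3^3) *v e1) $ i = N$i$1"
  and e3_mult: "((N::real^3^3) *v e3) $ i = N$i$3"
  by (simp_all add: e1_def e3_def mult_vector3)

lemma chart_transition:
  assumes B: "affine_coords_at p B" and B': "affine_coords_at p B'"
  obtains N :: "real^3^3" where "N$1$3 = 0" "N$2$3 = 0" "B ** N = B'"
proof -
  obtain A where A: "B ** A = mat 1" "A ** B = mat 1"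
    using B unfolding affine_coords_at_def invertible_def by blast
  obtain t where t: "t \<noteq> 0" "B *v e3 = t *\<^sub>R p" using B unfolding affine_coords_at_def by blast
  obtain t' where t': "B' *v e3 = t' *\<^sub>R p" using B' unfolding affine_coords_at_def by blast
  define N where "N = A ** B'"
  have "N *v e3 = (t'/t) *\<^sub>R (A *v (B *v e3))"
    using t by (simp add: N_def t' matrix_vector_mul_assoc[symmetric] matrix_vector_mult_scaleR)
  also have "\<dots> = (t'/t) *\<^sub>R e3" by (simp add: matrix_vector_mul_assoc A)
  finally have "\<And>i. (N *v e3) $ i = (t'/t) * e3 $ i" by simp
  then have "N$1$3 = 0" "N$2$3 = 0" by (metis e3_mult mult_zero_right e3_def vector_3)+
  moreover have "B ** N = B'" by (simp add: N_def matrix_mul_assoc A)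
  ultimately show ?thesis by (rule that)
qed

lemma chart_transition_line:
  fixes B B' N :: "real^3^3"
  assumes "n \<noteq> 0" and B: "affine_coords_at_line p n B" and B': "affine_coords_at_line p n B'"
    and N: "B ** N = B'"
  shows "N$2$1 = 0"
proof -
  obtain A where A: "B ** A = mat 1"
    using B unfolding affine_coords_at_line_def affine_coords_at_def invertible_def by blast
  define u where "u = n v* B"
  have u: "\<And>v. n \<bullet> (B *v v) = u \<bullet> v" unfolding u_def by (simp add: dot_lmul_matrix)
  have "u \<bullet> e1 = 0" "u \<bullet> e3 = 0"
    using B u unfolding affine_coords_at_line_def on_line_def by auto
  then have u13: "u$1 = 0" "u$3 = 0" by (simp_all add: inner_vec_def sum_3 e1_def e3_def)
  have "u \<noteq> 0"
  proof
    assume "u = 0"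
    then have "n v* (B ** A) = 0" unfolding u_def by (simp add: vector_matrix_mul_assoc[symmetric])
    then show False using \<open>n \<noteq> 0\<close> by (simp add: A vector_matrix_mul_rid)
  qed
  with u13 have "u$2 \<noteq> 0" by (auto simp: vec_eq_iff forall_3)
  have "0 = n \<bullet> (B *v (N *v e1))"
    using B' N unfolding affine_coords_at_line_def on_line_def by (simp add: matrix_vector_mul_assoc)
  also have "\<dots> = u \<bullet> (N *v e1)" by (rule u)
  also have "\<dots> = u$2 * N$2$1" by (simp add: inner_vec_def sum_3 u13 e1_mult)
  finally show ?thesis using \<open>u$2 \<noteq> 0\<close> by simp
qed

lemma local_coeffs_transition:
  assumes f: "f \<in> H4" and a: "local_coeffs f B a" and a': "local_coeffs f B' a'"
    and N: "B ** N = B'" "N$1$3 = 0" "N$2$3 = 0"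
  shows "(\<Sum>(i,j)\<in>D4. a' i j * x^i * y^j)
       = (\<Sum>(i,j)\<in>D4. a i j * (N$1$1*x + N$1$2*y)^i * (N$2$1*x + N$2$2*y)^j
            * (N$3$1*x + N$3$2*y + N$3$3)^(4-i-j))"
proof -
  have v: "N *v vector[x,y,1]
      = vector[N$1$1*x + N$1$2*y, N$2$1*x + N$2$2*y, N$3$1*x + N$3$2*y + N$3$3]"
    using N by (simp add: vec_eq_iff forall_3 mult_vector3)
  have "(\<Sum>(i,j)\<in>D4. a' i j * x^i * y^j) = f (B' *v vector[x,y,1])"
    using a' by (simp add: local_coeffs_def)
  also have "\<dots> = f (B *v (N *v vector[x,y,1]))" using N by (simp add: matrix_vector_mul_assoc)
  also note v
  also note local_coeffs_homogeneous[OF f a]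
  finally show ?thesis .
qed

lemma low_vanish_chart_independent:
  assumes f: "f \<in> H4" and a: "local_coeffs f B a" and a': "local_coeffs f B' a'"
    and B: "affine_coords_at p B" and B': "affine_coords_at p B'" and lv: "low_vanish 1 d a"
  shows "low_vanish 1 d a'"
proof -
  obtain N where N: "N$1$3 = 0" "N$2$3 = 0" "B ** N = B'" using chart_transition[OF B B'] .
  show ?thesis
    by (rule low_vanish_substitution[OF local_coeffs_transition[OF f a a' N(3,1,2)] _ _ lv]) simp_all
qed

lemma low_vanish_line_chart_independent:
  assumes f: "f \<in> H4" and a: "local_coeffs f B a" and a': "local_coeffs f B' a'"
    and n: "n \<noteq> 0" and B: "affine_coords_at_line p n B" and B': "affine_coords_at_line p n B'"
    and w: "1 \<le> w" and lv: "low_vanish w d a"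
  shows "low_vanish w d a'"
proof -
  obtain N where N: "N$1$3 = 0" "N$2$3 = 0" "B ** N = B'"
    using chart_transition B B' unfolding affine_coords_at_line_def by blast
  have "N$2$1 = 0" by (rule chart_transition_line[OF n B B' N(3)])
  then show ?thesis
    using low_vanish_substitution[OF local_coeffs_transition[OF f a a' N(3,1,2)] w _ lv] by simp
qed

lemma Ipt_iff:
  assumes B: "affine_coords_at p B" and f: "f \<in> H4" and a: "local_coeffs f B a"
  shows "f \<in> Ipt p \<longleftrightarrow> low_vanish 1 2 a"
proof
  assume "f \<in> Ipt p"
  then obtain B' a' where "affine_coords_at p B'" "local_coeffs f B' a'" "low_vanish 1 2 a'"
    unfolding Ipt_def low_vanish_1_2 by blast
  then show "low_vanish 1 2 a" using low_vanish_chart_independent f a B by blast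
next
  assume "low_vanish 1 2 a"
  then show "f \<in> Ipt p" using B f a unfolding Ipt_def low_vanish_1_2 by blast
qed

lemma Ipl_iff:
  assumes n: "n \<noteq> 0" and B: "affine_coords_at_line p n B" and f: "f \<in> H4" and a: "local_coeffs f B a"
  shows "f \<in> Ipl p n \<longleftrightarrow> low_vanish 2 4 a"
proof
  assume "f \<in> Ipl p n"
  then obtain B' a' where "affine_coords_at_line p n B'" "local_coeffs f B' a'" "low_vanish 2 4 a'"
    unfolding Ipl_def low_vanish_2_4 by blast
  then show "low_vanish 2 4 a"
    using low_vanish_line_chart_independent[OF f _ a n _ B] by simp
next
  assume "low_vanish 2 4 a"
  then show "f \<in> Ipl p n" using B f a unfolding Ipl_def low_vanish_2_4 by blast
qed

section \<open>Positivity forces the conditions defining I\<close>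

text \<open>A nonnegative polynomial in t vanishing at 0 has a critical point there.\<close>
lemma nonneg_linear_coeff:
  fixes c1 c2 c3 c4 :: real
  assumes "\<And>t. 0 \<le> c1*t + c2*t^2 + c3*t^3 + c4*t^4" shows "c1 = 0"
proof -
  have "DERIV (\<lambda>t. c1*t + c2*t^2 + c3*t^3 + c4*t^4) 0 :> c1"
    by (auto intro!: derivative_eq_intros)
  then show ?thesis by (rule DERIV_local_min[of _ _ _ 1]) (use assms in auto)
qed

lemma nonneg_cubic_coeff:
  fixes c3 c4 :: real
  assumes nn: "\<And>t. 0 \<le> c3*t^3 + c4*t^4" shows "c3 = 0"
proof -
  have "0 \<le> c3*t + c4*t^2 + 0*t^3 + 0*t^4" for t
  proof (cases "t = 0")
    case False
    have "c3*t^3 + c4*t^4 = t^2 * (c3*t + c4*t^2)" by (simp add: algebra_simps power_numeral_reduce)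
    then show ?thesis using nn[of t] False by (simp add: zero_le_mult_iff)
  qed simp
  then show ?thesis by (rule nonneg_linear_coeff)
qed

lemma nonneg_quadratic_coeff:
  fixes c2 c3 c4 :: real
  assumes nn: "\<And>t. 0 \<le> c2*t^2 + c3*t^3 + c4*t^4" shows "0 \<le> c2"
proof -
  have "\<forall>\<^sub>F t in at 0. 0 \<le> c2 + c3*t + c4*t^2"
  proof (rule eventually_at_topological[THEN iffD2], intro exI[of _ UNIV] conjI ballI impI)
    fix t :: real assume "t \<noteq> 0"
    have "c2*t^2 + c3*t^3 + c4*t^4 = t^2 * (c2 + c3*t + c4*t^2)"
      by (simp add: algebra_simps power_numeral_reduce)
    then show "0 \<le> c2 + c3*t + c4*t^2" using nn[of t] \<open>t \<noteq> 0\<close> by (simp add: zero_le_mult_iff)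
  qed auto
  moreover have "((\<lambda>t. c2 + c3*t + c4*t^2) \<longlongrightarrow> c2 + c3*0 + c4*0^2) (at (0::real))"
    by (intro tendsto_intros)
  ultimately show ?thesis using tendsto_lowerbound by fastforce
qed

lemma nonneg_local_point:
  fixes a :: "nat \<Rightarrow> nat \<Rightarrow> real"
  assumes nn: "\<And>x y. 0 \<le> (\<Sum>(i,j)\<in>D4. a i j * x^i * y^j)" and a0: "a 0 0 = 0"
  shows "low_vanish 1 2 a"
proof -
  have "0 \<le> a 1 0 * t + a 2 0 * t^2 + a 3 0 * t^3 + a 4 0 * t^4" for t
    using nn[of t 0] a0 by (simp add: sum_D4)
  moreover have "0 \<le> a 0 1 * t + a 0 2 * t^2 + a 0 3 * t^3 + a 0 4 * t^4" for t
    using nn[of 0 t] a0 by (simp add: sum_D4)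
  ultimately show ?thesis using a0 nonneg_linear_coeff unfolding low_vanish_1_2 by metis
qed

text \<open>At a zero where the restriction to the line y = 0 vanishes doubly, nonnegativity kills
  the x^3 term (restriction to y = 0) and the x y term (restriction to the curves y = s x).\<close>
lemma nonneg_local_line:
  fixes a :: "nat \<Rightarrow> nat \<Rightarrow> real"
  assumes nn: "\<And>x y. 0 \<le> (\<Sum>(i,j)\<in>D4. a i j * x^i * y^j)" and a: "low_vanish 2 3 a"
  shows "low_vanish 2 4 a"
proof -
  have a3: "a 0 0 = 0" "a 1 0 = 0" "a 0 1 = 0" "a 2 0 = 0" using a by (simp_all add: low_vanish_2_3)
  have "0 \<le> a 3 0 * t^3 + a 4 0 * t^4" for t
    using nn[of t 0] a3 by (simp add: sum_D4)
  then have a30: "a 3 0 = 0" by (rule nonneg_cubic_coeff)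
  have "0 \<le> a 1 1 * s + a 0 2 * s^2" for s
  proof (rule nonneg_quadratic_coeff)
    fix t
    have "(\<Sum>(i,j)\<in>D4. a i j * t^i * (s*t)^j) = (a 1 1 * s + a 0 2 * s^2) * t^2
        + (a 2 1 * s + a 1 2 * s^2 + a 0 3 * s^3) * t^3
        + (a 4 0 + a 3 1 * s + a 2 2 * s^2 + a 1 3 * s^3 + a 0 4 * s^4) * t^4"
      unfolding sum_D4 using a3 a30 by (simp add: power_mult_distrib algebra_simps power_numeral_reduce)
    then show "0 \<le> (a 1 1 * s + a 0 2 * s^2) * t^2 + (a 2 1 * s + a 1 2 * s^2 + a 0 3 * s^3) * t^3
        + (a 4 0 + a 3 1 * s + a 2 2 * s^2 + a 1 3 * s^3 + a 0 4 * s^4) * t^4"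
      using nn[of t "s*t"] by simp
  qed
  then have "a 1 1 = 0" using nonneg_linear_coeff[of "a 1 1" "a 0 2" 0 0] by simp
  then show ?thesis using a3 a30 by (simp add: low_vanish_2_4)
qed

lemma local_coeffs_nonneg:
  assumes "f \<in> P34" "local_coeffs f B a"
  shows "0 \<le> (\<Sum>(i,j)\<in>D4. a i j * x^i * y^j)"
  using assms unfolding P34_def local_coeffs_def by (metis (no_types, lifting) mem_Collect_eq)

lemma local_coeffs_centre:
  assumes f: "f \<in> H4" and B: "affine_coords_at p B" and a: "local_coeffs f B a" and fp: "f p = 0"
  shows "a 0 0 = 0"
proof -
  obtain t where t: "B *v e3 = t *\<^sub>R p" using B unfolding affine_coords_at_def by blast
  have "a 0 0 = f (B *v vector[0,0,1])"
    using a unfolding local_coeffs_def by (simp add: sum_D4)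
  also have "\<dots> = 0" using t fp by (simp add: e3_def quartic_homogeneous[OF f])
  finally show ?thesis .
qed

section \<open>Linear structure: I_T is a subspace containing F_T\<close>

interpretation fm: module "\<lambda>c (f :: real^3 \<Rightarrow> real) v. c * f v"
  by unfold_locales (auto simp: algebra_simps fun_eq_iff)

lemma subspace_intro:
  assumes "(\<lambda>v. 0) \<in> S" "\<And>r f g. f \<in> S \<Longrightarrow> g \<in> S \<Longrightarrow> (\<lambda>v. r * f v + g v) \<in> S"
  shows "fm.subspace S"
proof (rule fm.subspaceI)
  show "0 \<in> S" using assms(1) by (simp add: zero_fun_def)
next
  fix f g assume "f \<in> S" "g \<in> S"
  then show "f + g \<in> S" using assms(2)[of f g 1] by (simp add: plus_fun_def)
next
  fix c f assume "f \<in> S"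
  then show "(\<lambda>v. c * f v) \<in> S" using assms by fastforce
qed

definition form4 :: "(nat \<times> nat \<times> nat \<Rightarrow> real) \<Rightarrow> real^3 \<Rightarrow> real" where
  "form4 c v = (\<Sum>(i,j,k)\<in>monos4. c (i,j,k) * (v$1)^i * (v$2)^j * (v$3)^k)"

lemma H4_eq_range_form4: "H4 = range form4"
  by (auto simp: H4_def form4_def fun_eq_iff)

lemma H4_zero: "(\<lambda>v. 0) \<in> H4"
proof -
  have "(\<lambda>v. 0) = form4 (\<lambda>m. 0)" by (simp add: form4_def fun_eq_iff)
  then show ?thesis by (simp add: H4_eq_range_form4)
qed

lemma H4_lin: assumes "f \<in> H4" "g \<in> H4" shows "(\<lambda>v. r * f v + g v) \<in> H4"
proof -
  obtain c d where "f = form4 c" "g = form4 d" using assms by (auto simp: H4_eq_range_form4)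
  then have "(\<lambda>v. r * f v + g v) = form4 (\<lambda>m. r * c m + d m)"
    by (simp add: fun_eq_iff form4_def sum.distrib sum_distrib_left case_prod_beta algebra_simps)
  then show ?thesis by (simp add: H4_eq_range_form4)
qed

lemma H4_sum: "(\<And>k. k \<in> A \<Longrightarrow> F k \<in> H4) \<Longrightarrow> (\<lambda>v. \<Sum>k\<in>A. F k v) \<in> H4"
  by (induction A rule: infinite_finite_induct) (auto simp: H4_zero H4_lin[of _ _ 1, simplified])

lemma H4_subspace: "fm.subspace H4"
  by (rule subspace_intro) (auto intro: H4_zero H4_lin)

lemma local_condition_subspace:
  "fm.subspace {f \<in> H4. \<exists>a. local_coeffs f B a \<and> low_vanish w d a}"
proof (rule subspace_intro)
  have "local_coeffs (\<lambda>v. 0) B (\<lambda>i j. 0)" by (simp add: local_coeffs_def)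
  then show "(\<lambda>v. 0) \<in> {f \<in> H4. \<exists>a. local_coeffs f B a \<and> low_vanish w d a}"
    using fm.subspace_0[OF H4_subspace] by (auto simp: low_vanish_def zero_fun_def)
next
  fix r f g
  assume "f \<in> {f \<in> H4. \<exists>a. local_coeffs f B a \<and> low_vanish w d a}"
    and "g \<in> {f \<in> H4. \<exists>a. local_coeffs f B a \<and> low_vanish w d a}"
  then obtain a b where fg: "f \<in> H4" "g \<in> H4" and a: "local_coeffs f B a" "low_vanish w d a"
    and b: "local_coeffs g B b" "low_vanish w d b" by blast
  have "local_coeffs (\<lambda>v. r * f v + g v) B (\<lambda>i j. r * a i j + b i j)"
    using a(1) b(1) unfolding local_coeffs_def
    by (simp add: sum.distrib sum_distrib_left case_prod_beta algebra_simps)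
  moreover have "low_vanish w d (\<lambda>i j. r * a i j + b i j)"
    using a(2) b(2) by (auto simp: low_vanish_def)
  moreover have "(\<lambda>v. r * f v + g v) \<in> H4"
    using fm.subspace_add[OF H4_subspace fm.subspace_scale[OF H4_subspace fg(1)] fg(2)]
    by (simp add: plus_fun_def)
  ultimately show "(\<lambda>v. r * f v + g v) \<in> {f \<in> H4. \<exists>a. local_coeffs f B a \<and> low_vanish w d a}"
    by blast
qed

lemma Ipt_eq_local_condition:
  assumes B: "affine_coords_at p B"
  shows "Ipt p = {f \<in> H4. \<exists>a. local_coeffs f B a \<and> low_vanish 1 2 a}"
proof (intro equalityI subsetI)
  fix f assume f: "f \<in> Ipt p"
  then have "f \<in> H4" by (simp add: Ipt_def)
  with f show "f \<in> {f \<in> H4. \<exists>a. local_coeffs f B a \<and> low_vanish 1 2 a}"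
    using Ipt_iff[OF B] local_coeffs_exist by blast
qed (use Ipt_iff[OF B] in blast)

lemma Ipl_eq_local_condition:
  assumes n: "n \<noteq> 0" and B: "affine_coords_at_line p n B"
  shows "Ipl p n = {f \<in> H4. \<exists>a. local_coeffs f B a \<and> low_vanish 2 4 a}"
proof (intro equalityI subsetI)
  fix f assume f: "f \<in> Ipl p n"
  then have "f \<in> H4" by (simp add: Ipl_def)
  with f show "f \<in> {f \<in> H4. \<exists>a. local_coeffs f B a \<and> low_vanish 2 4 a}"
    using Ipl_iff[OF n B] local_coeffs_exist by blast
qed (use Ipl_iff[OF n B] in blast)

lemma Fpt_subset_Ipt:
  assumes B: "affine_coords_at p B" shows "Fpt p \<subseteq> Ipt p"
proof
  fix f assume "f \<in> Fpt p"
  then have fP: "f \<in> P34" and fp: "f p = 0" by (auto simp: Fpt_def)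
  then have f: "f \<in> H4" by (simp add: P34_def)
  obtain a where a: "local_coeffs f B a" using local_coeffs_exist[OF f] by blast
  have "low_vanish 1 2 a"
    by (rule nonneg_local_point[OF local_coeffs_nonneg[OF fP a] local_coeffs_centre[OF f B a fp]])
  then show "f \<in> Ipt p" using Ipt_iff[OF B f a] by simp
qed

lemma Fpl_subset_Ipl: "Fpl p n \<subseteq> Ipl p n"
proof
  fix f assume "f \<in> Fpl p n"
  then obtain B a where fP: "f \<in> P34" and B: "affine_coords_at_line p n B"
    and a: "local_coeffs f B a" "low_vanish 2 3 a"
    unfolding Fpl_def low_vanish_2_3 by blast
  have "low_vanish 2 4 a" by (rule nonneg_local_line[OF local_coeffs_nonneg[OF fP a(1)] a(2)])
  moreover have "f \<in> H4" using fP by (simp add: P34_def)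
  ultimately show "f \<in> Ipl p n"
    unfolding Ipl_def low_vanish_2_4 using B a(1) by blast
qed

definition charted :: "(real^3) list \<Rightarrow> ((real^3) \<times> (real^3)) list \<Rightarrow> bool" where
  "charted ss pls \<longleftrightarrow> (\<forall>s\<in>set ss. \<exists>B. affine_coords_at s B)
     \<and> (\<forall>pn\<in>set pls. snd pn \<noteq> 0 \<and> (\<exists>B. affine_coords_at_line (fst pn) (snd pn) B))"

lemma charted_pointD:
  "charted ss pls \<Longrightarrow> s \<in> set ss \<Longrightarrow> \<exists>B. affine_coords_at s B"
  by (simp add: charted_def)

lemma charted_lineD:
  "charted ss pls \<Longrightarrow> (p,n) \<in> set pls \<Longrightarrow> n \<noteq> 0 \<and> (\<exists>B. affine_coords_at_line p n B)"
  unfolding charted_def by (metis fst_conv snd_conv)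

lemma Iconf_subspace:
  assumes "charted ss pls" shows "fm.subspace (Iconf ss pls)"
proof -
  have "fm.subspace (Ipt s)" if s: "s \<in> set ss" for s
  proof -
    obtain B where "affine_coords_at s B" using charted_pointD[OF assms s] by blast
    then have "Ipt s = {f \<in> H4. \<exists>a. local_coeffs f B a \<and> low_vanish 1 2 a}"
      by (rule Ipt_eq_local_condition)
    then show ?thesis using local_condition_subspace by simp
  qed
  moreover have "fm.subspace (Ipl p n)" if pn: "(p,n) \<in> set pls" for p n
  proof -
    obtain B where "n \<noteq> 0" "affine_coords_at_line p n B" using charted_lineD[OF assms pn] by blast
    then have "Ipl p n = {f \<in> H4. \<exists>a. local_coeffs f B a \<and> low_vanish 2 4 a}"
      by (rule Ipl_eq_local_condition)
    then show ?thesis using local_condition_subspace by simp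
  qed
  ultimately show ?thesis
    unfolding Iconf_def by (intro fm.subspace_inter H4_subspace fm.subspace_Int) auto
qed

lemma Fconf_subset_Iconf:
  assumes "charted ss pls" shows "Fconf ss pls \<subseteq> Iconf ss pls"
proof
  fix f assume "f \<in> Fconf ss pls"
  then have fP: "f \<in> P34" and fs: "f \<in> (\<Inter>s\<in>set ss. Fpt s)"
    and fpn: "f \<in> (\<Inter>(p,n)\<in>set pls. Fpl p n)"
    unfolding Fconf_def by blast+
  have "f \<in> H4" using fP by (simp add: P34_def)
  moreover have "f \<in> Ipt s" if s: "s \<in> set ss" for s
  proof -
    obtain B where "affine_coords_at s B" using charted_pointD[OF assms s] by blast
    then show ?thesis using Fpt_subset_Ipt fs s by blast
  qed
  moreover have "f \<in> Ipl p n" if pn: "(p,n) \<in> set pls" for p n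
    using INT_D[OF fpn pn] Fpl_subset_Ipl by auto
  ultimately show "f \<in> Iconf ss pls" unfolding Iconf_def by blast
qed

lemma fspan_Fconf_eq_Iconf:
  assumes "charted ss pls" "Iconf ss pls \<subseteq> fm.span (Fconf ss pls)"
  shows "fspan (Fconf ss pls) = Iconf ss pls"
  unfolding fspan_def
  using fm.span_minimal[OF Fconf_subset_Iconf Iconf_subspace] assms by blast

section \<open>Squares in linear systems of quadrics\<close>

definition mon3 :: "nat \<Rightarrow> nat \<Rightarrow> nat \<Rightarrow> real^3 \<Rightarrow> real" where
  "mon3 i j k v = (v$1)^i * (v$2)^j * (v$3)^k"

lemma mon3_mult: "mon3 i j k v * mon3 i' j' k' v = mon3 (i + i') (j + j') (k + k') v"
  by (simp add: mon3_def power_add)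

lemma finite_monos4 [simp]: "finite monos4"
  by (rule finite_subset[of _ "{..4} \<times> {..4} \<times> {..4}"]) (auto simp: monos4_def)

lemma mon3_H4: assumes "i + j + k = 4" shows "mon3 i j k \<in> H4"
proof -
  have "(\<lambda>(a,b,c). (if (a,b,c) = (i,j,k) then 1 else 0) * (v$1)^a * (v$2)^b * (v$3)^c)
      = (\<lambda>m. if m = (i,j,k) then mon3 i j k v else 0)" for v
    by (auto simp: fun_eq_iff mon3_def)
  moreover have "(i,j,k) \<in> monos4" using assms by (simp add: monos4_def)
  ultimately have "form4 (\<lambda>m. if m = (i,j,k) then 1 else 0) v = mon3 i j k v" for v
    by (simp add: form4_def)
  then have "mon3 i j k = form4 (\<lambda>m. if m = (i,j,k) then 1 else 0)" by (simp add: fun_eq_iff)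
  then show ?thesis by (simp add: H4_eq_range_form4)
qed

lemma quartic_combination_H4:
  assumes "\<And>v. f v = (\<Sum>(c,i,j,k)\<leftarrow>ms. c * mon3 i j k v)" "\<forall>(c,i,j,k)\<in>set ms. i + j + k = 4"
  shows "f \<in> H4"
proof -
  have "(\<lambda>v. \<Sum>(c,i,j,k)\<leftarrow>ms. c * mon3 i j k v) \<in> H4"
    using assms(2)
  proof (induction ms)
    case (Cons m ms)
    obtain c i j k where m: "m = (c,i,j,k)" by (cases m)
    then have "mon3 i j k \<in> H4" using Cons.prems by (simp add: mon3_H4)
    then show ?case using Cons by (simp add: m H4_lin)
  qed (simp add: H4_zero)
  moreover have "f = (\<lambda>v. \<Sum>(c,i,j,k)\<leftarrow>ms. c * mon3 i j k v)" using assms(1) by (simp add: fun_eq_iff)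
  ultimately show ?thesis by simp
qed

definition lincomb :: "(real^3 \<Rightarrow> real) list \<Rightarrow> (nat \<Rightarrow> real) \<Rightarrow> real^3 \<Rightarrow> real" where
  "lincomb qs p v = (\<Sum>k<length qs. p k * (qs!k) v)"

lemma lincomb_Nil [simp]: "lincomb [] p v = 0"
  and lincomb_Cons [simp]: "lincomb (q # qs) p v = p 0 * q v + lincomb qs (\<lambda>k. p (Suc k)) v"
  by (simp_all add: lincomb_def sum.lessThan_Suc_shift del: sum.lessThan_Suc)

lemma sum_of_bool_delta:
  fixes f :: "nat \<Rightarrow> real"
  shows "finite A \<Longrightarrow> (\<Sum>m\<in>A. of_bool (m = k) * f m) = (if k \<in> A then f k else 0)"
  by (induction A rule: finite_induct) auto

lemma lincomb_two_members:
  assumes "k < length qs" "l < length qs"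
  shows "lincomb qs (\<lambda>m. of_bool (m = k) + s * of_bool (m = l)) v = (qs!k) v + s * (qs!l) v"
proof -
  have "lincomb qs (\<lambda>m. of_bool (m = k) + s * of_bool (m = l)) v
      = (\<Sum>m<length qs. of_bool (m = k) * (qs!m) v + s * (of_bool (m = l) * (qs!m) v))"
    unfolding lincomb_def by (rule sum.cong) (simp_all add: algebra_simps)
  also have "\<dots> = (\<Sum>m<length qs. of_bool (m = k) * (qs!m) v)
      + s * (\<Sum>m<length qs. of_bool (m = l) * (qs!m) v)"
    by (simp only: sum.distrib sum_distrib_left[symmetric])
  finally show ?thesis using assms by (simp add: sum_of_bool_delta)
qed

text \<open>Polarisation: products of members of a linear system lie in the span of the squares.\<close>
lemma products_in_span_of_squares:
  assumes sq: "\<And>p. (\<lambda>v. (lincomb qs p v)^2) \<in> S" and "q \<in> set qs" "r \<in> set qs"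
  shows "(\<lambda>v. q v * r v) \<in> fm.span S"
proof -
  obtain k l where kl: "k < length qs" "l < length qs" "q = qs!k" "r = qs!l"
    using assms(2,3) by (metis in_set_conv_nth)
  define sq where "sq s v = (lincomb qs (\<lambda>m. of_bool (m = k) + s * of_bool (m = l)) v)^2" for s v
  have "sq s v = (q v + s * r v)^2" for s v
    unfolding sq_def using lincomb_two_members[OF kl(1,2)] kl(3,4) by simp
  then have "(\<lambda>v. q v * r v) = (\<lambda>v. (1/4) * sq 1 v) + (\<lambda>v. (-1/4) * sq (-1) v)"
    by (simp add: fun_eq_iff power2_eq_square algebra_simps)
  also have "\<dots> \<in> fm.span S"
    using sq unfolding sq_def by (intro fm.span_add fm.span_scale fm.span_base)
  finally show ?thesis .
qed

lemma sums_of_products_in_span_of_squares: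
  assumes sq: "\<And>p. (\<lambda>v. (lincomb qs p v)^2) \<in> S"
    and ts: "\<forall>(c,q,r)\<in>set ts. q \<in> set qs \<and> r \<in> set qs"
  shows "(\<lambda>v. \<Sum>(c,q,r)\<leftarrow>ts. c * (q v * r v)) \<in> fm.span S"
  using ts
proof (induction ts)
  case Nil
  then show ?case using fm.span_zero by (simp add: zero_fun_def)
next
  case (Cons t ts)
  obtain c q r where t: "t = (c,q,r)" by (cases t)
  have "(\<lambda>v. \<Sum>(c,q,r)\<leftarrow>t # ts. c * (q v * r v))
      = (\<lambda>v. c * (q v * r v)) + (\<lambda>v. \<Sum>(c,q,r)\<leftarrow>ts. c * (q v * r v))"
    by (simp add: t fun_eq_iff)
  also have "\<dots> \<in> fm.span S"
    using Cons products_in_span_of_squares[OF sq] by (intro fm.span_add fm.span_scale) (auto simp: t)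
  finally show ?case .
qed

lemma square_lincomb_H4:
  assumes "\<And>q r. q \<in> set qs \<Longrightarrow> r \<in> set qs \<Longrightarrow> (\<lambda>v. q v * r v) \<in> H4"
  shows "(\<lambda>v. (lincomb qs p v)^2) \<in> H4"
proof -
  have "(\<lambda>v. (lincomb qs p v)^2)
      = (\<lambda>v. \<Sum>k<length qs. \<Sum>l<length qs. (p k * p l) * ((qs!k) v * (qs!l) v))"
    by (simp add: fun_eq_iff lincomb_def power2_eq_square sum_product algebra_simps)
  also have "\<dots> \<in> H4"
    using assms by (intro H4_sum H4_lin[where g="\<lambda>v. 0", simplified] H4_zero) auto
  finally show ?thesis .
qed

definition monomials :: "(nat \<times> nat \<times> nat) list \<Rightarrow> (real^3 \<Rightarrow> real) list" where
  "monomials es = map (\<lambda>(i,j,k). mon3 i j k) es"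

lemma monomial_products_H4:
  assumes "\<forall>(i,j,k)\<in>set es. i + j + k = 2" "q \<in> set (monomials es)" "r \<in> set (monomials es)"
  shows "(\<lambda>v. q v * r v) \<in> H4"
proof -
  obtain i j k i' j' k' where "(i,j,k) \<in> set es" "(i',j',k') \<in> set es"
    and "q = mon3 i j k" "r = mon3 i' j' k'"
    using assms(2,3) by (auto simp: monomials_def)
  moreover have "i + j + k = 2" "i' + j' + k' = 2" using assms(1) calculation(1,2) by auto
  ultimately show ?thesis by (simp add: mon3_mult mon3_H4)
qed

lemma low_vanish_of_local_poly:
  assumes a: "local_coeffs f B a" and P: "\<And>x y. f (B *v vector[x,y,1]) = eval2 P x y" and "wt_ge w d P"
  shows "low_vanish w d a"
proof (rule low_vanish_of_poly)
  show "eval2 (poly_of a) = eval2 P"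
    using a P by (simp add: fun_eq_iff eval2_poly_of local_coeffs_def)
qed (rule assms(3))

text \<open>Qs are the local polynomials in the chart B of the generators qs, all of weighted order
  at least 2 for the weights (1, 2): the generators vanish at the centre and are tangent there
  to the x-axis.\<close>
definition local_polys :: "real^3^3 \<Rightarrow> (real^3 \<Rightarrow> real) list \<Rightarrow> real poly poly list \<Rightarrow> bool" where
  "local_polys B qs Qs \<longleftrightarrow>
     list_all2 (\<lambda>q Q. (\<forall>x y. q (B *v vector[x,y,1]) = eval2 Q x y) \<and> wt_ge 2 2 Q) qs Qs"

lemma lincomb_local_poly:
  assumes "local_polys B qs Qs"
  shows "\<exists>Q. (\<forall>x y. lincomb qs p (B *v vector[x,y,1]) = eval2 Q x y) \<and> wt_ge 2 2 Q"
  using assms unfolding local_polys_def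
proof (induction qs Qs arbitrary: p rule: list_all2_induct)
  case Nil
  show ?case by (intro exI[of _ 0]) (simp add: eval2_def supported_0)
next
  case (Cons q qs Q Qs)
  obtain R where R: "\<forall>x y. lincomb qs (\<lambda>k. p (Suc k)) (B *v vector[x,y,1]) = eval2 R x y" "wt_ge 2 2 R"
    using Cons.IH by blast
  have "wt_ge 2 (0 + 2) (monom2 0 0 (p 0) * Q)"
    by (rule wt_ge_mult[OF wt_ge_zero_order]) (use Cons.hyps in simp)
  then have "wt_ge 2 2 (monom2 0 0 (p 0) * Q + R)"
    unfolding add_0 using R(2) by (rule supported_add)
  then show ?case
    using Cons.hyps R(1) by (intro exI[of _ "monom2 0 0 (p 0) * Q + R"]) simp
qed

lemma squares_in_Fconf:
  assumes prod: "\<And>q r. q \<in> set qs \<Longrightarrow> r \<in> set qs \<Longrightarrow> (\<lambda>v. q v * r v) \<in> H4"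
    and pts: "\<And>s q. s \<in> set ss \<union> fst ` set pls \<Longrightarrow> q \<in> set qs \<Longrightarrow> q s = 0"
    and lines: "\<And>p n. (p,n) \<in> set pls \<Longrightarrow> \<exists>B Qs. affine_coords_at_line p n B \<and> local_polys B qs Qs"
  shows "(\<lambda>v. (lincomb qs p v)^2) \<in> Fconf ss pls"
proof -
  let ?f = "\<lambda>v. (lincomb qs p v)^2"
  have fH: "?f \<in> H4" by (rule square_lincomb_H4[OF prod])
  then have fP: "?f \<in> P34" by (simp add: P34_def)
  have zero: "?f s = 0" if "s \<in> set ss \<union> fst ` set pls" for s
  proof -
    have "(qs!k) s = 0" if "k < length qs" for k using pts[OF \<open>s \<in> _\<close>] nth_mem that by blast
    then show ?thesis by (simp add: lincomb_def)
  qed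
  have "?f \<in> Fpl p' n" if pn: "(p',n) \<in> set pls" for p' n
  proof -
    obtain B Qs where B: "affine_coords_at_line p' n B" and Qs: "local_polys B qs Qs"
      using lines[OF pn] by blast
    obtain Q where Q: "\<And>x y. lincomb qs p (B *v vector[x,y,1]) = eval2 Q x y" "wt_ge 2 2 Q"
      using lincomb_local_poly[OF Qs] by blast
    obtain a where a: "local_coeffs ?f B a" using local_coeffs_exist[OF fH] by blast
    have "wt_ge 2 (2 + 2) (Q * Q)" by (rule wt_ge_mult[OF Q(2) Q(2)])
    then have "low_vanish 2 4 a"
      by (intro low_vanish_of_local_poly[OF a, of "Q * Q"]) (simp_all add: Q(1) power2_eq_square)
    moreover have "?f p' = 0" using zero pn by force
    ultimately show ?thesis
      using fP B a unfolding Fpl_def low_vanish_2_4 by blast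
  qed
  then show ?thesis using fP zero unfolding Fconf_def Fpt_def by auto
qed

section \<open>The four configurations\<close>

text \<open>Explicit charts: C13 is centred at e1 and adapted to e1 \<or> e3, C23 at e2 adapted to
  e2 \<or> e3, C14 at e1 adapted to e1 \<or> e4, and the identity is a chart at e3.\<close>
definition C13 :: "real^3^3" where "C13 = vector[vector[0,0,1], vector[0,1,0], vector[1,0,0]]"
definition C23 :: "real^3^3" where "C23 = vector[vector[0,1,0], vector[0,0,1], vector[1,0,0]]"
definition C14 :: "real^3^3" where "C14 = vector[vector[0,0,1], vector[1,1,0], vector[1,0,0]]"

lemma C13_mult: "C13 *v v = vector[v$3, v$2, v$1]"
  and C23_mult: "C23 *v v = vector[v$2, v$3, v$1]"
  and C14_mult: "C14 *v v = vector[v$3, v$1 + v$2, v$1]"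
  by (simp_all add: C13_def C23_def C14_def vec_eq_iff forall_3 matrix_vector_mult_def sum_3)

lemma invertible_charts: "invertible C13" "invertible C23" "invertible C14"
  by (simp_all add: invertible_det_nz det_3 C13_def C23_def C14_def)

lemma join_nonzero: "join e1 e3 \<noteq> 0" "join e2 e3 \<noteq> 0" "join e1 e4 \<noteq> 0"
  by (simp_all add: join_def cross3_def e1_def e2_def e3_def e4_def vec_eq_iff forall_3)

lemma chart_13: "affine_coords_at_line e1 (join e1 e3) C13"
  and chart_23: "affine_coords_at_line e2 (join e2 e3) C23"
  and chart_14: "affine_coords_at_line e1 (join e1 e4) C14"
  using invertible_charts
  by (auto simp: affine_coords_at_line_def affine_coords_at_def on_line_def join_def cross3_def
      inner_vec_def sum_3 C13_mult C23_mult C14_mult e1_def e2_def e3_def e4_def intro: exI[of _ 1])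

lemma chart_3: "affine_coords_at e3 (mat 1)"
  unfolding affine_coords_at_def invertible_def by (auto intro: exI[of _ 1] exI[of _ "mat 1"])

lemma monos4_eq:
  "monos4 = {(0,0,4),(0,1,3),(0,2,2),(0,3,1),(0,4,0),(1,0,3),(1,1,2),(1,2,1),(1,3,0),(2,0,2),(2,1,1),
     (2,2,0),(3,0,1),(3,1,0),(4,0,0)}" (is "_ = ?M")
proof (intro equalityI subsetI)
  fix m assume "m \<in> monos4"
  then obtain i j k where m: "m = (i,j,k)" "i + j + k = 4" by (auto simp: monos4_def)
  then have "i = 0 \<or> i = 1 \<or> i = 2 \<or> i = 3 \<or> i = 4" "j = 0 \<or> j = 1 \<or> j = 2 \<or> j = 3 \<or> j = 4"
    by arith+
  then show "m \<in> ?M" using m by (elim disjE) simp_all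
qed (auto simp: monos4_def)

lemma form4_expand: "form4 c v = c(0,0,4)*(v$3)^4 + c(0,1,3)*(v$2)*(v$3)^3 + c(0,2,2)*(v$2)^2*(v$3)^2
  + c(0,3,1)*(v$2)^3*(v$3) + c(0,4,0)*(v$2)^4 + c(1,0,3)*(v$1)*(v$3)^3 + c(1,1,2)*(v$1)*(v$2)*(v$3)^2
  + c(1,2,1)*(v$1)*(v$2)^2*(v$3) + c(1,3,0)*(v$1)*(v$2)^3 + c(2,0,2)*(v$1)^2*(v$3)^2
  + c(2,1,1)*(v$1)^2*(v$2)*(v$3) + c(2,2,0)*(v$1)^2*(v$2)^2 + c(3,0,1)*(v$1)^3*(v$3)
  + c(3,1,0)*(v$1)^3*(v$2) + c(4,0,0)*(v$1)^4"
  by (simp add: form4_def monos4_eq)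

definition a13 :: "(nat \<times> nat \<times> nat \<Rightarrow> real) \<Rightarrow> nat \<Rightarrow> nat \<Rightarrow> real" where
  "a13 c k l = c(4-k-l, l, k)"
definition a23 :: "(nat \<times> nat \<times> nat \<Rightarrow> real) \<Rightarrow> nat \<Rightarrow> nat \<Rightarrow> real" where
  "a23 c k l = c(l, 4-k-l, k)"
definition a3 :: "(nat \<times> nat \<times> nat \<Rightarrow> real) \<Rightarrow> nat \<Rightarrow> nat \<Rightarrow> real" where
  "a3 c k l = c(k, l, 4-k-l)"
definition a14 :: "(nat \<times> nat \<times> nat \<Rightarrow> real) \<Rightarrow> nat \<Rightarrow> nat \<Rightarrow> real" where
  "a14 c k l =
    (if (k,l) = (0,0) then c(4,0,0)
     else if (k,l) = (0,1) then c(3,1,0)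
     else if (k,l) = (0,2) then c(2,2,0)
     else if (k,l) = (0,3) then c(1,3,0)
     else if (k,l) = (0,4) then c(0,4,0)
     else if (k,l) = (1,0) then c(3,0,1) + c(3,1,0)
     else if (k,l) = (1,1) then c(2,1,1) + 2 * c(2,2,0)
     else if (k,l) = (1,2) then c(1,2,1) + 3 * c(1,3,0)
     else if (k,l) = (1,3) then c(0,3,1) + 4 * c(0,4,0)
     else if (k,l) = (2,0) then c(2,0,2) + c(2,1,1) + c(2,2,0)
     else if (k,l) = (2,1) then c(1,1,2) + 2 * c(1,2,1) + 3 * c(1,3,0)
     else if (k,l) = (2,2) then c(0,2,2) + 3 * c(0,3,1) + 6 * c(0,4,0)
     else if (k,l) = (3,0) then c(1,0,3) + c(1,1,2) + c(1,2,1) + c(1,3,0)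
     else if (k,l) = (3,1) then c(0,1,3) + 2 * c(0,2,2) + 3 * c(0,3,1) + 4 * c(0,4,0)
     else if (k,l) = (4,0) then c(0,0,4) + c(0,1,3) + c(0,2,2) + c(0,3,1) + c(0,4,0)
     else 0)"

lemma local_13: "local_coeffs (form4 c) C13 (a13 c)"
  and local_23: "local_coeffs (form4 c) C23 (a23 c)"
  and local_3: "local_coeffs (form4 c) (mat 1) (a3 c)"
  unfolding local_coeffs_def sum_D4 form4_expand
  by (simp_all add: C13_mult C23_mult a13_def a23_def a3_def)

lemma local_14: "local_coeffs (form4 c) C14 (a14 c)"
  unfolding local_coeffs_def sum_D4 form4_expand
  by (simp add: C14_mult a14_def algebra_simps power2_eq_square power3_eq_cube power4_eq_xxxx)

lemma form4_H4: "form4 c \<in> H4"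
  by (simp add: H4_eq_range_form4)

lemma affine_coords_of_line_chart: "affine_coords_at_line p n B \<Longrightarrow> affine_coords_at p B"
  by (simp add: affine_coords_at_line_def)

lemma Ipl_13: "form4 c \<in> Ipl e1 (join e1 e3) \<longleftrightarrow> low_vanish 2 4 (a13 c)"
  and Ipl_23: "form4 c \<in> Ipl e2 (join e2 e3) \<longleftrightarrow> low_vanish 2 4 (a23 c)"
  and Ipl_14: "form4 c \<in> Ipl e1 (join e1 e4) \<longleftrightarrow> low_vanish 2 4 (a14 c)"
  and Ipt_2: "form4 c \<in> Ipt e2 \<longleftrightarrow> low_vanish 1 2 (a23 c)"
  and Ipt_3: "form4 c \<in> Ipt e3 \<longleftrightarrow> low_vanish 1 2 (a3 c)"
  by (rule Ipl_iff join_nonzero chart_13 chart_23 chart_14 form4_H4 local_13 local_23 local_14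
      Ipt_iff affine_coords_of_line_chart chart_3 local_3)+

text \<open>T1 = {(e1, e1 \<or> e3)}: the quadrics through e1 that are tangent there to the line
  e1 \<or> e3 = {y = 0} are spanned by xy, yz, y^2, z^2.\<close>
definition gens_T1 :: "(real^3 \<Rightarrow> real) list" where
  "gens_T1 = monomials [(1,1,0), (0,1,1), (0,2,0), (0,0,2)]"

lemma squares_T1: "(\<lambda>v. (lincomb gens_T1 p v)^2) \<in> Fconf [] [(e1, join e1 e3)]"
proof (rule squares_in_Fconf)
  show "(\<lambda>v. q v * r v) \<in> H4" if "q \<in> set gens_T1" "r \<in> set gens_T1" for q r
    using that unfolding gens_T1_def by (rule monomial_products_H4[rotated]) auto
  show "q s = 0" if "s \<in> set [] \<union> fst ` set [(e1, join e1 e3)]" "q \<in> set gens_T1" for s q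
    using that by (auto simp: gens_T1_def monomials_def mon3_def e1_def)
  show "\<exists>B Qs. affine_coords_at_line p n B \<and> local_polys B gens_T1 Qs"
    if "(p,n) \<in> set [(e1, join e1 e3)]" for p n
    using that chart_13
    by (intro exI[of _ C13] exI[of _ "[monom2 0 1 1, monom2 1 1 1, monom2 0 2 1, monom2 2 0 1]"])
      (auto simp: local_polys_def gens_T1_def monomials_def mon3_def C13_mult intro!: supported_mon)
qed

text \<open>The conditions of I_T1, read off in the chart C13, kill the six coefficients of
  x^4, x^3 z, x^3 y, x^2 z^2, x^2 y z, x z^3; the remaining monomials are products of generators.\<close>
lemma spanning_T1: "Iconf [] [(e1, join e1 e3)] \<subseteq> fm.span (Fconf [] [(e1, join e1 e3)])"
proof
  fix f assume f: "f \<in> Iconf [] [(e1, join e1 e3)]"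
  then obtain c where fc: "f = form4 c" by (auto simp: Iconf_def H4_eq_range_form4)
  then have "low_vanish 2 4 (a13 c)" using f Ipl_13 by (simp add: Iconf_def)
  then have c: "c(4,0,0) = 0" "c(3,0,1) = 0" "c(3,1,0) = 0" "c(2,0,2) = 0" "c(2,1,1) = 0" "c(1,0,3) = 0"
    by (simp_all add: low_vanish_2_4 a13_def)
  let ?xy = "mon3 1 1 0" and ?yz = "mon3 0 1 1" and ?yy = "mon3 0 2 0" and ?zz = "mon3 0 0 2"
  have "f = (\<lambda>v. \<Sum>(c,q,r)\<leftarrow>[(c(2,2,0), ?xy, ?xy), (c(1,2,1), ?xy, ?yz), (c(1,3,0), ?xy, ?yy),
      (c(1,1,2), ?xy, ?zz), (c(0,2,2), ?yz, ?yz), (c(0,3,1), ?yz, ?yy), (c(0,1,3), ?yz, ?zz),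
      (c(0,4,0), ?yy, ?yy), (c(0,0,4), ?zz, ?zz)]. c * (q v * r v))"
    by (simp add: fc fun_eq_iff form4_expand c[unfolded One_nat_def] One_nat_def mon3_def algebra_simps
        power2_eq_square power3_eq_cube power4_eq_xxxx)
  also have "\<dots> \<in> fm.span (Fconf [] [(e1, join e1 e3)])"
    by (rule sums_of_products_in_span_of_squares[OF squares_T1]) (simp add: gens_T1_def monomials_def)
  finally show "f \<in> fm.span (Fconf [] [(e1, join e1 e3)])" .
qed

text \<open>T2 = {e2, (e1, e1 \<or> e3)}: among them, those through e2 are spanned by xy, yz, z^2.\<close>
definition gens_T2 :: "(real^3 \<Rightarrow> real) list" where
  "gens_T2 = monomials [(1,1,0), (0,1,1), (0,0,2)]"

lemma squares_T2: "(\<lambda>v. (lincomb gens_T2 p v)^2) \<in> Fconf [e2] [(e1, join e1 e3)]"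
proof (rule squares_in_Fconf)
  show "(\<lambda>v. q v * r v) \<in> H4" if "q \<in> set gens_T2" "r \<in> set gens_T2" for q r
    using that unfolding gens_T2_def by (rule monomial_products_H4[rotated]) auto
  show "q s = 0" if "s \<in> set [e2] \<union> fst ` set [(e1, join e1 e3)]" "q \<in> set gens_T2" for s q
    using that by (auto simp: gens_T2_def monomials_def mon3_def e1_def e2_def)
  show "\<exists>B Qs. affine_coords_at_line p n B \<and> local_polys B gens_T2 Qs"
    if "(p,n) \<in> set [(e1, join e1 e3)]" for p n
    using that chart_13
    by (intro exI[of _ C13] exI[of _ "[monom2 0 1 1, monom2 1 1 1, monom2 2 0 1]"])
      (auto simp: local_polys_def gens_T2_def monomials_def mon3_def C13_mult intro!: supported_mon)
qed

lemma spanning_T2: "Iconf [e2] [(e1, join e1 e3)] \<subseteq> fm.span (Fconf [e2] [(e1, join e1 e3)])"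
proof
  fix f assume f: "f \<in> Iconf [e2] [(e1, join e1 e3)]"
  then obtain c where fc: "f = form4 c" by (auto simp: Iconf_def H4_eq_range_form4)
  then have "low_vanish 2 4 (a13 c)" "low_vanish 1 2 (a23 c)"
    using f Ipl_13 Ipt_2 by (simp_all add: Iconf_def)
  then have c: "c(4,0,0) = 0" "c(3,0,1) = 0" "c(3,1,0) = 0" "c(2,0,2) = 0" "c(2,1,1) = 0" "c(1,0,3) = 0"
    "c(0,4,0) = 0" "c(0,3,1) = 0" "c(1,3,0) = 0"
    unfolding low_vanish_2_4 low_vanish_1_2 by (simp_all add: a13_def a23_def)
  let ?xy = "mon3 1 1 0" and ?yz = "mon3 0 1 1" and ?zz = "mon3 0 0 2"
  have "f = (\<lambda>v. \<Sum>(c,q,r)\<leftarrow>[(c(2,2,0), ?xy, ?xy), (c(1,2,1), ?xy, ?yz), (c(1,1,2), ?xy, ?zz),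
      (c(0,2,2), ?yz, ?yz), (c(0,1,3), ?yz, ?zz), (c(0,0,4), ?zz, ?zz)]. c * (q v * r v))"
    by (simp add: fc fun_eq_iff form4_expand c[unfolded One_nat_def] One_nat_def mon3_def algebra_simps
        power2_eq_square power3_eq_cube power4_eq_xxxx)
  also have "\<dots> \<in> fm.span (Fconf [e2] [(e1, join e1 e3)])"
    by (rule sums_of_products_in_span_of_squares[OF squares_T2]) (simp add: gens_T2_def monomials_def)
  finally show "f \<in> fm.span (Fconf [e2] [(e1, join e1 e3)])" .
qed

text \<open>T3 = {(e1, e1 \<or> e3), (e2, e2 \<or> e3)}: the admissible quadrics are spanned by xy and z^2.\<close>
definition gens_T3 :: "(real^3 \<Rightarrow> real) list" where
  "gens_T3 = monomials [(1,1,0), (0,0,2)]"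

lemma squares_T3: "(\<lambda>v. (lincomb gens_T3 p v)^2) \<in> Fconf [] [(e1, join e1 e3), (e2, join e2 e3)]"
proof (rule squares_in_Fconf)
  show "(\<lambda>v. q v * r v) \<in> H4" if "q \<in> set gens_T3" "r \<in> set gens_T3" for q r
    using that unfolding gens_T3_def by (rule monomial_products_H4[rotated]) auto
  show "q s = 0" if "s \<in> set [] \<union> fst ` set [(e1, join e1 e3), (e2, join e2 e3)]" "q \<in> set gens_T3"
    for s q
    using that by (auto simp: gens_T3_def monomials_def mon3_def e1_def e2_def)
  show "\<exists>B Qs. affine_coords_at_line p n B \<and> local_polys B gens_T3 Qs"
    if "(p,n) \<in> set [(e1, join e1 e3), (e2, join e2 e3)]" for p n
  proof -
    have "local_polys B gens_T3 [monom2 0 1 1, monom2 2 0 1]" if "B = C13 \<or> B = C23" for B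
      using that by (auto simp: local_polys_def gens_T3_def monomials_def mon3_def C13_mult C23_mult
          intro!: supported_mon)
    then show ?thesis using that chart_13 chart_23 by auto
  qed
qed

lemma spanning_T3:
  "Iconf [] [(e1, join e1 e3), (e2, join e2 e3)] \<subseteq> fm.span (Fconf [] [(e1, join e1 e3), (e2, join e2 e3)])"
proof
  fix f assume f: "f \<in> Iconf [] [(e1, join e1 e3), (e2, join e2 e3)]"
  then obtain c where fc: "f = form4 c" by (auto simp: Iconf_def H4_eq_range_form4)
  then have "low_vanish 2 4 (a13 c)" "low_vanish 2 4 (a23 c)"
    using f Ipl_13 Ipl_23 by (simp_all add: Iconf_def)
  then have c: "c(4,0,0) = 0" "c(3,0,1) = 0" "c(3,1,0) = 0" "c(2,0,2) = 0" "c(2,1,1) = 0" "c(1,0,3) = 0"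
    "c(0,4,0) = 0" "c(0,3,1) = 0" "c(1,3,0) = 0" "c(0,2,2) = 0" "c(1,2,1) = 0" "c(0,1,3) = 0"
    by (simp_all add: low_vanish_2_4 a13_def a23_def)
  let ?xy = "mon3 1 1 0" and ?zz = "mon3 0 0 2"
  have "f = (\<lambda>v. \<Sum>(c,q,r)\<leftarrow>[(c(2,2,0), ?xy, ?xy), (c(1,1,2), ?xy, ?zz), (c(0,0,4), ?zz, ?zz)].
      c * (q v * r v))"
    by (simp add: fc fun_eq_iff form4_expand c[unfolded One_nat_def] One_nat_def mon3_def algebra_simps
        power2_eq_square power3_eq_cube power4_eq_xxxx)
  also have "\<dots> \<in> fm.span (Fconf [] [(e1, join e1 e3), (e2, join e2 e3)])"
    by (rule sums_of_products_in_span_of_squares[OF squares_T3]) (simp add: gens_T3_def monomials_def)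
  finally show "f \<in> fm.span (Fconf [] [(e1, join e1 e3), (e2, join e2 e3)])" .
qed

text \<open>T4 = {e2, e3, (e1, e1 \<or> e4)}: the quadrics through e1, e2, e3 are the combinations of
  xy, xz, yz; tangency to e1 \<or> e4 = {y = z} at e1 leaves xy - xz and yz.\<close>
definition gens_T4 :: "(real^3 \<Rightarrow> real) list" where
  "gens_T4 = [\<lambda>v. mon3 1 1 0 v - mon3 1 0 1 v, mon3 0 1 1]"

lemma squares_T4: "(\<lambda>v. (lincomb gens_T4 p v)^2) \<in> Fconf [e2, e3] [(e1, join e1 e4)]"
proof (rule squares_in_Fconf)
  show "(\<lambda>v. q v * r v) \<in> H4" if "q \<in> set gens_T4" "r \<in> set gens_T4" for q r
  proof -
    have "(\<lambda>v. (mon3 1 1 0 v - mon3 1 0 1 v) * (mon3 1 1 0 v - mon3 1 0 1 v)) \<in> H4"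
      by (rule quartic_combination_H4[where ms = "[(1,2,2,0), (-2,2,1,1), (1,2,0,2)]"])
        (simp_all add: mon3_def algebra_simps power2_eq_square)
    moreover have "(\<lambda>v. (mon3 1 1 0 v - mon3 1 0 1 v) * mon3 0 1 1 v) \<in> H4"
      by (rule quartic_combination_H4[where ms = "[(1,1,2,1), (-1,1,1,2)]"])
        (simp_all add: mon3_def algebra_simps power2_eq_square)
    moreover have "(\<lambda>v. mon3 0 1 1 v * (mon3 1 1 0 v - mon3 1 0 1 v)) \<in> H4"
      by (rule quartic_combination_H4[where ms = "[(1,1,2,1), (-1,1,1,2)]"])
        (simp_all add: mon3_def algebra_simps power2_eq_square)
    moreover have "(\<lambda>v. mon3 0 1 1 v * mon3 0 1 1 v) \<in> H4"
      by (simp add: mon3_mult mon3_H4)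
    ultimately show ?thesis using that by (auto simp: gens_T4_def)
  qed
  show "q s = 0" if "s \<in> set [e2, e3] \<union> fst ` set [(e1, join e1 e4)]" "q \<in> set gens_T4" for s q
    using that by (auto simp: gens_T4_def mon3_def e1_def e2_def e3_def)
  show "\<exists>B Qs. affine_coords_at_line p n B \<and> local_polys B gens_T4 Qs"
    if "(p,n) \<in> set [(e1, join e1 e4)]" for p n
    using that chart_14
    by (intro exI[of _ C14] exI[of _ "[monom2 0 1 1, monom2 2 0 1 + monom2 1 1 1]"])
      (auto simp: local_polys_def gens_T4_def mon3_def C14_mult algebra_simps power2_eq_square
        intro!: supported_add supported_mon)
qed

lemma spanning_T4: "Iconf [e2, e3] [(e1, join e1 e4)] \<subseteq> fm.span (Fconf [e2, e3] [(e1, join e1 e4)])"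
proof
  fix f assume f: "f \<in> Iconf [e2, e3] [(e1, join e1 e4)]"
  then obtain c where fc: "f = form4 c" by (auto simp: Iconf_def H4_eq_range_form4)
  then have "low_vanish 2 4 (a14 c)" "low_vanish 1 2 (a23 c)" "low_vanish 1 2 (a3 c)"
    using f Ipl_14 Ipt_2 Ipt_3 by (simp_all add: Iconf_def)
  then have "c(0,4,0) = 0" "c(0,3,1) = 0" "c(1,3,0) = 0" "c(0,0,4) = 0" "c(1,0,3) = 0" "c(0,1,3) = 0"
    "c(4,0,0) = 0" "c(3,0,1) + c(3,1,0) = 0" "c(3,1,0) = 0" "c(2,0,2) + c(2,1,1) + c(2,2,0) = 0"
    "c(2,1,1) + 2 * c(2,2,0) = 0" "c(1,0,3) + c(1,1,2) + c(1,2,1) + c(1,3,0) = 0"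
    unfolding low_vanish_2_4 low_vanish_1_2 by (simp_all add: a14_def a23_def a3_def)
  then have c: "c(0,4,0) = 0" "c(0,3,1) = 0" "c(1,3,0) = 0" "c(0,0,4) = 0" "c(1,0,3) = 0"
    "c(0,1,3) = 0" "c(4,0,0) = 0" "c(3,1,0) = 0" "c(3,0,1) = 0" "c(2,1,1) = -2 * c(2,2,0)"
    "c(2,0,2) = c(2,2,0)" "c(1,1,2) = - c(1,2,1)"
    by linarith+
  let ?g = "\<lambda>v. mon3 1 1 0 v - mon3 1 0 1 v" and ?yz = "mon3 0 1 1"
  have "f = (\<lambda>v. \<Sum>(c,q,r)\<leftarrow>[(c(2,2,0), ?g, ?g), (c(1,2,1), ?g, ?yz), (c(0,2,2), ?yz, ?yz)].
      c * (q v * r v))"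
    by (simp add: fc fun_eq_iff form4_expand c[unfolded One_nat_def] One_nat_def mon3_def algebra_simps
        power2_eq_square power3_eq_cube power4_eq_xxxx)
  also have "\<dots> \<in> fm.span (Fconf [e2, e3] [(e1, join e1 e4)])"
    by (rule sums_of_products_in_span_of_squares[OF squares_T4]) (simp add: gens_T4_def)
  finally show "f \<in> fm.span (Fconf [e2, e3] [(e1, join e1 e4)])" .
qed

lemma configurations_charted:
  "charted [] [(e1, join e1 e3)]"
  "charted [e2] [(e1, join e1 e3)]"
  "charted [] [(e1, join e1 e3), (e2, join e2 e3)]"
  "charted [e2, e3] [(e1, join e1 e4)]"
  using join_nonzero chart_13 chart_23 chart_14 chart_3 affine_coords_of_line_chart[OF chart_23]
  by (auto simp: charted_def)

theorem mainTheorem10: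
  shows "fspan (Fconf [] [(e1, join e1 e3)]) = Iconf [] [(e1, join e1 e3)] \<and>
         fspan (Fconf [e2] [(e1, join e1 e3)]) = Iconf [e2] [(e1, join e1 e3)] \<and>
         fspan (Fconf [] [(e1, join e1 e3), (e2, join e2 e3)])
           = Iconf [] [(e1, join e1 e3), (e2, join e2 e3)] \<and>
         fspan (Fconf [e2, e3] [(e1, join e1 e4)]) = Iconf [e2, e3] [(e1, join e1 e4)]"
  using fspan_Fconf_eq_Iconf[OF configurations_charted(1) spanning_T1]
    fspan_Fconf_eq_Iconf[OF configurations_charted(2) spanning_T2]
    fspan_Fconf_eq_Iconf[OF configurations_charted(3) spanning_T3]
    fspan_Fconf_eq_Iconf[OF configurations_charted(4) spanning_T4]
  by blast

end
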